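(* Let $X,Y$ be Banach spaces, let $-A$ be the generator of a strongly continuous semigroup $(T(t))_{t\ge0}$ on $X$, and let $C:\mathcal D(A)\to Y$ be linear and bounded for the graph norm. Suppose $(A,C)$ is an admissible BFC-system and $T(t)$ is a compact operator for some $t>0$. Then $X$ is finite-dimensional.
   Context: For $\tau\in(0,\infty]$ set $M(\tau)^2:=\sup_{x\in\mathcal D(A),\|x\|=1}\int_0^\tau\|CT(t)x\|_Y^2\,dt$ and $m(\tau)^2:=\inf_{x\in\mathcal D(A),\|x\|=1}\int_0^\tau\|CT(t)x\|_Y^2\,dt$. $C$ is admissible in time $\tau$ if $M(\tau)<\infty$, exactly observable in time $\eta$ if $m(\eta)>0$. $(A,C)$ is a BFC-system if there exist $0<\eta<\tau$ such that $C$ is admissible and exactly observable in time $\tau$ and $M(\eta)<m(\tau)$. *)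

theory Defs
  imports "HOL-Analysis.Analysis"
begin

text \<open>Strongly continuous (C0) semigroup on a Banach space, indexed by t \<ge> 0
  (values at negative times are irrelevant).\<close>
definition c0_semigroup :: "(real \<Rightarrow> 'x::banach \<Rightarrow>\<^sub>L 'x) \<Rightarrow> bool" where
  "c0_semigroup T \<longleftrightarrow>
     T 0 = id_blinfun \<and>
     (\<forall>s t. 0 \<le> s \<longrightarrow> 0 \<le> t \<longrightarrow> T (s + t) = T s o\<^sub>L T t) \<and>
     (\<forall>x. continuous_on {0..} (\<lambda>t. blinfun_apply (T t) x))"

definition gen_dom :: "(real \<Rightarrow> 'x::banach \<Rightarrow>\<^sub>L 'x) \<Rightarrow> 'x set" where
  "gen_dom T = {x. \<exists>y. ((\<lambda>h. (1 / h) *\<^sub>R (blinfun_apply (T h) x - x)) \<longlongrightarrow> y) (at_right 0)}"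

text \<open>The generator G of T (meaningful on gen_dom T).\<close>
definition gen :: "(real \<Rightarrow> 'x::banach \<Rightarrow>\<^sub>L 'x) \<Rightarrow> 'x \<Rightarrow> 'x" where
  "gen T x = Lim (at_right 0) (\<lambda>h. (1 / h) *\<^sub>R (blinfun_apply (T h) x - x))"

definition is_minus_generator :: "(real \<Rightarrow> 'x::banach \<Rightarrow>\<^sub>L 'x) \<Rightarrow> ('x \<Rightarrow> 'x) \<Rightarrow> 'x set \<Rightarrow> bool" where
  "is_minus_generator T A D \<longleftrightarrow> D = gen_dom T \<and> (\<forall>x\<in>D. A x = - gen T x)"

definition graph_bounded_linear :: "('x::banach \<Rightarrow> 'x) \<Rightarrow> 'x set \<Rightarrow> ('x \<Rightarrow> 'y::banach) \<Rightarrow> bool" where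
  "graph_bounded_linear A D C \<longleftrightarrow>
     (\<forall>x\<in>D. \<forall>y\<in>D. C (x + y) = C x + C y) \<and>
     (\<forall>x\<in>D. \<forall>c. C (c *\<^sub>R x) = c *\<^sub>R C x) \<and>
     (\<exists>K. \<forall>x\<in>D. norm (C x) \<le> K * (norm x + norm (A x)))"

definition obs_energy :: "(real \<Rightarrow> 'x::banach \<Rightarrow>\<^sub>L 'x) \<Rightarrow> ('x \<Rightarrow> 'y::banach) \<Rightarrow> real \<Rightarrow> 'x \<Rightarrow> real" where
  "obs_energy T C \<tau> x = integral {0..\<tau>} (\<lambda>t. (norm (C (blinfun_apply (T t) x)))\<^sup>2)"

text \<open>M(\<tau>)^2 and m(\<tau>)^2 (finite \<tau>), as extended reals.\<close>
definition M_sq :: "(real \<Rightarrow> 'x::banach \<Rightarrow>\<^sub>L 'x) \<Rightarrow> 'x set \<Rightarrow> ('x \<Rightarrow> 'y::banach) \<Rightarrow> real \<Rightarrow> ereal" where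
  "M_sq T D C \<tau> = (SUP x\<in>{x\<in>D. norm x = 1}. ereal (obs_energy T C \<tau> x))"

definition m_sq :: "(real \<Rightarrow> 'x::banach \<Rightarrow>\<^sub>L 'x) \<Rightarrow> 'x set \<Rightarrow> ('x \<Rightarrow> 'y::banach) \<Rightarrow> real \<Rightarrow> ereal" where
  "m_sq T D C \<tau> = (INF x\<in>{x\<in>D. norm x = 1}. ereal (obs_energy T C \<tau> x))"

definition admissible_in_time where
  "admissible_in_time T D C \<tau> \<longleftrightarrow> M_sq T D C \<tau> < \<infinity>"

definition exactly_observable_in_time where
  "exactly_observable_in_time T D C \<tau> \<longleftrightarrow> m_sq T D C \<tau> > 0"

text \<open>BFC-system. Since M, m \<ge> 0, M(\<eta>) < m(\<tau>) iff M(\<eta>)^2 < m(\<tau>)^2.\<close>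
definition BFC_system where
  "BFC_system T D C \<longleftrightarrow>
     (\<exists>\<eta> \<tau>. 0 < \<eta> \<and> \<eta> < \<tau> \<and> admissible_in_time T D C \<tau> \<and>
        exactly_observable_in_time T D C \<tau> \<and> M_sq T D C \<eta> < m_sq T D C \<tau>)"

definition compact_op :: "('a::real_normed_vector \<Rightarrow>\<^sub>L 'b::real_normed_vector) \<Rightarrow> bool" where
  "compact_op S \<longleftrightarrow> compact (closure (blinfun_apply S ` ball 0 1))"

definition finite_dim_space :: "'a::real_vector itself \<Rightarrow> bool" where
  "finite_dim_space _ \<longleftrightarrow> (\<exists>B::'a set. finite B \<and> span B = UNIV)"

end

theory Submission
  imports Defs
begin

(* The condition M(\<eta>) < m(\<tau>) makes T(\<eta>) bounded below: splitting the observation energy of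
   x \<in> D(A) at time \<eta> gives
     m(\<tau>)\<^sup>2 \<parallel>x\<parallel>\<^sup>2 \<le> M(\<eta>)\<^sup>2 \<parallel>x\<parallel>\<^sup>2 + M(\<tau>)\<^sup>2 \<parallel>T(\<eta>) x\<parallel>\<^sup>2,
   and the bound extends to X because D(A) is dense. Then every T(n \<eta>) is bounded below, and for
   n \<eta> \<ge> t it factors through the compact operator T(t). A compact operator that is bounded below
   makes the closed unit ball compact, so X is finite-dimensional by Riesz's argument. *)

section \<open>Compact unit ball and finite dimension\<close>

lemma abs_scale_infdist_span_le:
  assumes "v \<in> span S"
  shows "\<bar>t\<bar> * infdist a (span S) \<le> norm (v + t *\<^sub>R a)"
proof (cases "t = 0")
  case False
  have "- (1 / t) *\<^sub>R v \<in> span S"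
    using assms by (intro span_scale)
  then have "infdist a (span S) \<le> dist a (- (1 / t) *\<^sub>R v)"
    by (rule infdist_le)
  also have "\<bar>t\<bar> * \<dots> = norm (t *\<^sub>R (a + (1 / t) *\<^sub>R v))"
    by (simp add: dist_norm)
  also have "\<dots> = norm (v + t *\<^sub>R a)"
    using False by (simp add: algebra_simps)
  finally show ?thesis
    by (simp add: mult_left_mono)
qed simp

lemma closed_span_finite:
  fixes S :: "'a::real_normed_vector set"
  assumes "finite S"
  shows "closed (span S)"
  using assms
proof (induction S rule: finite_induct)
  case (insert a S)
  show ?case
  proof (cases "a \<in> span S")
    case True
    then show ?thesis
      using insert.IH by (simp add: span_redundant)
  next
    case False
    define d where "d = infdist a (span S)"
    have "d > 0"
      using False insert.IH in_closed_iff_infdist_zero[of "span S" a] infdist_nonneg[of a "span S"]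
      unfolding d_def by (metis less_eq_real_def span_zero empty_iff)
    show ?thesis
      unfolding closed_sequential_limits
    proof (intro allI impI, elim conjE)
      fix x l
      assume x: "\<forall>n. x n \<in> span (insert a S)" and "x \<longlonglongrightarrow> l"
      have "\<forall>n. \<exists>k. x n - k *\<^sub>R a \<in> span S"
        using x by (simp add: span_insert)
      then obtain t where t: "\<And>n. x n - t n *\<^sub>R a \<in> span S"
        by metis
      obtain B where B: "\<And>n. norm (x n) \<le> B"
        using convergent_imp_bounded[OF \<open>x \<longlonglongrightarrow> l\<close>] unfolding bounded_iff by auto
      have "\<bar>t n\<bar> \<le> B / d" for n
      proof -
        have "\<bar>t n\<bar> * d \<le> norm ((x n - t n *\<^sub>R a) + t n *\<^sub>R a)"
          unfolding d_def by (rule abs_scale_infdist_span_le[OF t])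
        also have "\<dots> \<le> B"
          using B by simp
        finally show ?thesis
          using \<open>d > 0\<close> by (simp add: field_simps)
      qed
      then have "bounded (range t)"
        unfolding bounded_iff by auto
      then obtain c r where r: "strict_mono r" "(t \<circ> r) \<longlonglongrightarrow> c"
        using bounded_imp_convergent_subsequence by blast
      have "(\<lambda>n. x (r n) - (t \<circ> r) n *\<^sub>R a) \<longlonglongrightarrow> l - c *\<^sub>R a"
        using LIMSEQ_subseq_LIMSEQ[OF \<open>x \<longlonglongrightarrow> l\<close> r(1)] r(2)
        by (intro tendsto_intros) (simp_all add: comp_def)
      then have "l - c *\<^sub>R a \<in> span S"
        by (rule closed_sequentially[OF insert.IH, rotated]) (simp add: t)
      then show "l \<in> span (insert a S)"
        by (auto simp: span_insert)
    qed
  qed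
qed simp

lemma span_halving_approximation:
  fixes F :: "'a::real_normed_vector set"
  assumes net: "cball 0 1 \<subseteq> (\<Union>c\<in>F. ball c (1/2))"
  shows "\<exists>v\<in>span F. norm (x - v) \<le> norm x / 2 ^ k"
proof (induction k)
  case 0
  show ?case
    by (intro bexI[of _ 0]) (auto simp: span_zero)
next
  case (Suc k)
  then obtain v where v: "v \<in> span F" "norm (x - v) \<le> norm x / 2 ^ k"
    by blast
  define y where "y = x - v"
  show ?case
  proof (cases "y = 0")
    case True
    then show ?thesis
      using v by (intro bexI[of _ v]) (auto simp: y_def)
  next
    case False
    then obtain c where c: "c \<in> F" "dist c ((1 / norm y) *\<^sub>R y) < 1/2"
      using net[THEN subsetD, of "(1 / norm y) *\<^sub>R y"] by auto
    have "x - (v + norm y *\<^sub>R c) = norm y *\<^sub>R ((1 / norm y) *\<^sub>R y - c)"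
      using False by (simp add: y_def algebra_simps)
    then have "norm (x - (v + norm y *\<^sub>R c)) = norm y * norm ((1 / norm y) *\<^sub>R y - c)"
      by simp
    also have "\<dots> \<le> norm y * (1/2)"
      using c(2) by (intro mult_left_mono) (simp_all add: dist_norm norm_minus_commute)
    finally have "norm (x - (v + norm y *\<^sub>R c)) \<le> norm x / 2 ^ Suc k"
      using v(2) by (simp add: y_def)
    moreover have "v + norm y *\<^sub>R c \<in> span F"
      using c(1) by (intro span_add[OF v(1)] span_scale span_base)
    ultimately show ?thesis
      by blast
  qed
qed

lemma compact_cball_imp_finite_dim:
  assumes "compact (cball (0::'a::real_normed_vector) 1)"
  shows "finite_dim_space TYPE('a)"
proof -
  have "cball (0::'a) 1 \<subseteq> (\<Union>c\<in>cball 0 1. ball c (1/2))"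
    by (auto intro!: bexI)
  then obtain F where F: "finite F" "cball (0::'a) 1 \<subseteq> (\<Union>c\<in>F. ball c (1/2))"
    using compactE_image[OF assms] by (metis open_ball)
  have "x \<in> closure (span F)" for x :: 'a
    unfolding closure_approachable
  proof (intro allI impI)
    fix e :: real
    assume "e > 0"
    obtain k where k: "norm x / e < 2 ^ k"
      using real_arch_pow[of 2 "norm x / e"] by auto
    obtain v where "v \<in> span F" "norm (x - v) \<le> norm x / 2 ^ k"
      using span_halving_approximation[OF F(2)] by blast
    moreover have "norm x / 2 ^ k < e"
      using k \<open>e > 0\<close> by (simp add: field_simps)
    ultimately show "\<exists>y\<in>span F. dist y x < e"
      by (force simp: dist_norm norm_minus_commute)
  qed
  then show ?thesis
    using closed_span_finite[OF F(1)] F(1) unfolding finite_dim_space_def by auto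
qed


section \<open>Compact operators bounded below\<close>

lemma compact_op_comp:
  assumes "compact_op S"
  shows "compact_op (R o\<^sub>L S)"
proof -
  define K where "K = closure (blinfun_apply S ` ball 0 1)"
  have RK: "compact (blinfun_apply R ` K)"
    using assms unfolding compact_op_def K_def by (intro compact_continuous_image continuous_intros)
  have "blinfun_apply (R o\<^sub>L S) ` ball 0 1 \<subseteq> blinfun_apply R ` K"
    unfolding K_def using closure_subset by fastforce
  then have "closure (blinfun_apply (R o\<^sub>L S) ` ball 0 1) \<subseteq> blinfun_apply R ` K"
    by (rule closure_minimal[OF _ compact_imp_closed[OF RK]])
  then have eq: "closure (blinfun_apply (R o\<^sub>L S) ` ball 0 1)
      = closure (blinfun_apply (R o\<^sub>L S) ` ball 0 1) \<inter> blinfun_apply R ` K"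
    by blast
  then show ?thesis
    unfolding compact_op_def by (subst eq) (rule closed_Int_compact[OF closed_closure RK])
qed

lemma Cauchy_bounded_below_linear:
  assumes "linear f" "d > 0" "\<And>x. d * norm x \<le> norm (f x)" "Cauchy (\<lambda>n. f (g n))"
  shows "Cauchy g"
proof (rule metric_CauchyI)
  fix e :: real
  assume "e > 0"
  then obtain M where M: "\<And>m n. M \<le> m \<Longrightarrow> M \<le> n \<Longrightarrow> dist (f (g m)) (f (g n)) < d * e"
    using metric_CauchyD[OF assms(4), of "d * e"] assms(2) by auto
  have "dist (g m) (g n) < e" if "M \<le> m" "M \<le> n" for m n
  proof -
    have "d * dist (g m) (g n) \<le> dist (f (g m)) (f (g n))"
      using assms(3)[of "g m - g n"] by (simp add: dist_norm linear_diff[OF assms(1)])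
    then show ?thesis
      using M[OF that] assms(2) by (meson le_less_trans mult_less_cancel_left_pos)
  qed
  then show "\<exists>M. \<forall>m\<ge>M. \<forall>n\<ge>M. dist (g m) (g n) < e"
    by blast
qed

lemma compact_cball_if_compact_op_bounded_below:
  fixes S :: "'a::banach \<Rightarrow>\<^sub>L 'b::real_normed_vector"
  assumes "compact_op S" "d > 0" "\<And>x. d * norm x \<le> norm (blinfun_apply S x)"
  shows "compact (cball (0::'a) 1)"
  unfolding compact_eq_seq_compact_metric
proof (rule seq_compactI)
  fix f :: "nat \<Rightarrow> 'a"
  assume f: "\<forall>n. f n \<in> cball 0 1"
  define g where "g n = (1/2) *\<^sub>R f n" for n
  have "g n \<in> ball 0 1" for n
    using f[rule_format, of n] by (simp add: g_def)
  then have "\<forall>n. blinfun_apply S (g n) \<in> closure (blinfun_apply S ` ball 0 1)"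
    using closure_subset by blast
  moreover have "seq_compact (closure (blinfun_apply S ` ball 0 1))"
    using assms(1) unfolding compact_op_def by (rule compact_imp_seq_compact)
  ultimately obtain l r
    where r: "strict_mono r" "((\<lambda>n. blinfun_apply S (g n)) \<circ> r) \<longlonglongrightarrow> l"
    using seq_compactE by metis
  have "Cauchy (\<lambda>n. g (r n))"
    using assms(2,3) LIMSEQ_imp_Cauchy[OF r(2), unfolded comp_def]
    by (intro Cauchy_bounded_below_linear[where f = "blinfun_apply S"])
       (simp_all add: bounded_linear.linear[OF blinfun.bounded_linear_right])
  then obtain l' where "(\<lambda>n. g (r n)) \<longlonglongrightarrow> l'"
    using Cauchy_convergent_iff convergent_def by blast
  then have "(\<lambda>n. 2 *\<^sub>R g (r n)) \<longlonglongrightarrow> 2 *\<^sub>R l'"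
    by (intro tendsto_scaleR tendsto_const)
  then have "(f \<circ> r) \<longlonglongrightarrow> 2 *\<^sub>R l'"
    by (simp add: g_def comp_def)
  moreover have "2 *\<^sub>R l' \<in> cball 0 1"
    by (rule closed_sequentially[OF closed_cball _ calculation]) (use f in simp)
  ultimately show "\<exists>l\<in>cball 0 1. \<exists>r. strict_mono r \<and> (f \<circ> r) \<longlonglongrightarrow> l"
    using r(1) by blast
qed

lemma bounded_below_closure:
  fixes S :: "'a::real_normed_vector \<Rightarrow>\<^sub>L 'b::real_normed_vector"
  assumes "\<And>x. x \<in> X \<Longrightarrow> c * norm x \<le> norm (S x)" "y \<in> closure X"
  shows "c * norm y \<le> norm (S y)"
proof -
  have "closed {x. c * norm x \<le> norm (S x)}"
    by (intro closed_Collect_le continuous_intros)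
  then have "closure X \<subseteq> {x. c * norm x \<le> norm (S x)}"
    using assms(1) by (intro closure_minimal) auto
  then show ?thesis
    using assms(2) by auto
qed


section \<open>Generator and semigroup\<close>

definition diff_quotient :: "(real \<Rightarrow> 'x::banach \<Rightarrow>\<^sub>L 'x) \<Rightarrow> 'x \<Rightarrow> real \<Rightarrow> 'x" where
  "diff_quotient T x h = (1 / h) *\<^sub>R (T h x - x)"

lemma gen_domI: "(diff_quotient T x \<longlongrightarrow> y) (at_right 0) \<Longrightarrow> x \<in> gen_dom T"
  unfolding gen_dom_def diff_quotient_def[abs_def] by auto

lemma gen_eqI: "(diff_quotient T x \<longlongrightarrow> y) (at_right 0) \<Longrightarrow> gen T x = y"
  using tendsto_Lim[of "at_right 0" "diff_quotient T x" y]
  unfolding gen_def diff_quotient_def[abs_def] by simp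

lemma tendsto_gen: "x \<in> gen_dom T \<Longrightarrow> (diff_quotient T x \<longlongrightarrow> gen T x) (at_right 0)"
  unfolding gen_dom_def using gen_eqI by (fastforce simp: diff_quotient_def[abs_def])

lemma diff_quotient_zero: "diff_quotient T 0 = (\<lambda>h. 0)"
  by (simp add: fun_eq_iff diff_quotient_def blinfun.zero_right)

lemma diff_quotient_add: "diff_quotient T (x + y) = (\<lambda>h. diff_quotient T x h + diff_quotient T y h)"
  by (simp add: fun_eq_iff diff_quotient_def blinfun.add_right algebra_simps)

lemma diff_quotient_diff: "diff_quotient T (x - y) = (\<lambda>h. diff_quotient T x h - diff_quotient T y h)"
  by (simp add: fun_eq_iff diff_quotient_def blinfun.diff_right algebra_simps)

lemma diff_quotient_scaleR: "diff_quotient T (c *\<^sub>R x) = (\<lambda>h. c *\<^sub>R diff_quotient T x h)"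
  by (simp add: fun_eq_iff diff_quotient_def blinfun.scaleR_right algebra_simps)

lemma subspace_gen_dom: "subspace (gen_dom T)"
proof (rule subspaceI)
  show "0 \<in> gen_dom T"
    by (rule gen_domI[of _ _ 0]) (simp add: diff_quotient_zero)
next
  fix x y assume "x \<in> gen_dom T" "y \<in> gen_dom T"
  show "x + y \<in> gen_dom T"
    by (rule gen_domI[of _ _ "gen T x + gen T y"])
       (unfold diff_quotient_add, intro tendsto_add tendsto_gen \<open>x \<in> gen_dom T\<close> \<open>y \<in> gen_dom T\<close>)
next
  fix c x assume "x \<in> gen_dom T"
  show "c *\<^sub>R x \<in> gen_dom T"
    by (rule gen_domI[of _ _ "c *\<^sub>R gen T x"])
       (unfold diff_quotient_scaleR, intro tendsto_scaleR tendsto_const tendsto_gen \<open>x \<in> gen_dom T\<close>)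
qed

lemma gen_diff:
  assumes "x \<in> gen_dom T" "y \<in> gen_dom T"
  shows "gen T (x - y) = gen T x - gen T y"
  by (rule gen_eqI) (unfold diff_quotient_diff, intro tendsto_diff tendsto_gen assms)

lemma tendsto_right_difference_quotient:
  fixes F :: "real \<Rightarrow> 'a::real_normed_vector"
  assumes "(F has_vector_derivative v) (at h within {h..h+e})" "e > 0"
  shows "((\<lambda>r. (1/r) *\<^sub>R (F (h+r) - F h)) \<longlongrightarrow> v) (at_right 0)"
proof -
  have L: "((\<lambda>y. ((F y - F h) - (y - h) *\<^sub>R v) /\<^sub>R norm (y - h)) \<longlongrightarrow> 0) (at h within {h..h+e})"
    using assms(1) by (simp add: has_vector_derivative_def has_derivative_at_within)
  have small: "eventually (\<lambda>r. 0 < r \<and> r < e) (at_right (0::real))"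
    using assms(2) eventually_at_right_field by blast
  have "filterlim (\<lambda>r. h + r) (at h within {h..h+e}) (at_right 0)"
  proof (subst filterlim_at, intro conjI)
    show "\<forall>\<^sub>F r in at_right 0. h + r \<in> {h..h+e} \<and> h + r \<noteq> h"
      using small by eventually_elim auto
    show "((+) h \<longlongrightarrow> h) (at_right 0)"
      by (intro tendsto_eq_intros) (auto intro: tendsto_within_subset)
  qed
  from tendsto_add[OF filterlim_compose[OF L this] tendsto_const[of v]]
  have "((\<lambda>r. ((F (h+r) - F h) - r *\<^sub>R v) /\<^sub>R norm r + v) \<longlongrightarrow> v) (at_right 0)"
    by simp
  moreover have "eventually (\<lambda>r. ((F (h+r) - F h) - r *\<^sub>R v) /\<^sub>R norm r + v
                                = (1/r) *\<^sub>R (F (h+r) - F h)) (at_right 0)"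
    using small by eventually_elim (auto simp: algebra_simps divide_simps)
  ultimately show ?thesis
    by (rule tendsto_cong[THEN iffD1, rotated])
qed

context
  fixes T :: "real \<Rightarrow> 'x::banach \<Rightarrow>\<^sub>L 'x"
  assumes sg: "c0_semigroup T"
begin

lemma semigroup_zero [simp]: "T 0 x = x"
  using sg by (simp add: c0_semigroup_def)

lemma semigroup_comp: "0 \<le> s \<Longrightarrow> 0 \<le> t \<Longrightarrow> T (s + t) = T s o\<^sub>L T t"
  using sg by (simp add: c0_semigroup_def)

lemma semigroup_add: "0 \<le> s \<Longrightarrow> 0 \<le> t \<Longrightarrow> T (s + t) x = T s (T t x)"
  by (simp add: semigroup_comp)

lemma continuous_on_orbit: "continuous_on {0..} (\<lambda>t. T t x)"
  using sg by (simp add: c0_semigroup_def)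

lemma tendsto_diff_quotient_semigroup:
  assumes "x \<in> gen_dom T" "0 \<le> t"
  shows "(diff_quotient T (T t x) \<longlongrightarrow> T t (gen T x)) (at_right 0)"
proof -
  have "((\<lambda>h. T t (diff_quotient T x h)) \<longlongrightarrow> T t (gen T x)) (at_right 0)"
    using assms(1) by (intro blinfun.tendsto tendsto_const tendsto_gen)
  moreover have "eventually (\<lambda>h. T t (diff_quotient T x h) = diff_quotient T (T t x) h) (at_right 0)"
    using eventually_at_right_less[of 0]
  proof eventually_elim
    case (elim h)
    then have "T h (T t x) = T t (T h x)"
      using semigroup_add[of h t x] semigroup_add[of t h x] assms(2) by (simp add: add.commute)
    then show ?case
      by (simp add: diff_quotient_def blinfun.scaleR_right blinfun.diff_right)
  qed
  ultimately show ?thesis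
    by (rule tendsto_cong[THEN iffD1, rotated])
qed

lemma semigroup_in_gen_dom: "x \<in> gen_dom T \<Longrightarrow> 0 \<le> t \<Longrightarrow> T t x \<in> gen_dom T"
  by (rule gen_domI[OF tendsto_diff_quotient_semigroup])

lemma gen_semigroup: "x \<in> gen_dom T \<Longrightarrow> 0 \<le> t \<Longrightarrow> gen T (T t x) = T t (gen T x)"
  by (rule gen_eqI[OF tendsto_diff_quotient_semigroup])

lemma integrable_orbit: "0 \<le> a \<Longrightarrow> (\<lambda>s. T s x) integrable_on {a..b}"
  by (intro integrable_continuous_interval continuous_on_subset[OF continuous_on_orbit]) auto

lemma has_vector_derivative_integral_orbit:
  "0 \<le> u \<Longrightarrow> ((\<lambda>v. integral {0..v} (\<lambda>s. T s x)) has_vector_derivative T u x) (at u within {u..u+1})"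
  by (rule has_vector_derivative_within_subset[OF integral_has_vector_derivative[of 0 "u+1"]])
     (auto intro: continuous_on_subset[OF continuous_on_orbit])

lemma semigroup_integral_orbit:
  assumes "0 \<le> h" "0 \<le> r"
  shows "T r (integral {0..h} (\<lambda>s. T s x)) = integral {r..r+h} (\<lambda>s. T s x)"
proof -
  have "T r (integral {0..h} (\<lambda>s. T s x)) = integral {0..h} (\<lambda>s. T r (T s x))"
    by (simp add: integral_blinfun_apply[OF integrable_orbit[where a = 0]])
  also have "\<dots> = integral {0..h} (\<lambda>s. T (s + r) x)"
  proof (rule integral_cong)
    fix s assume "s \<in> {0..h}"
    then show "T r (T s x) = T (s + r) x"
      using assms semigroup_add[of r s x] by (simp add: add.commute)
  qed
  also have "\<dots> = integral {r..r+h} (\<lambda>s. T s x)"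
    using integral_shift_real_ivl[where f = "\<lambda>s. T s x" and a = r and b = "r+h" and c = r]
    by (simp add: add.commute)
  finally show ?thesis .
qed

lemma integral_orbit_in_gen_dom:
  assumes "0 \<le> h"
  shows "integral {0..h} (\<lambda>s. T s x) \<in> gen_dom T"
proof -
  define F where "F u = integral {0..u} (\<lambda>s. T s x)" for u
  have F_quotient: "((\<lambda>r. (1/r) *\<^sub>R (F (u+r) - F u)) \<longlongrightarrow> T u x) (at_right 0)" if "0 \<le> u" for u
    unfolding F_def using that
    by (intro tendsto_right_difference_quotient[where e = 1] has_vector_derivative_integral_orbit) auto
  have "eventually (\<lambda>r. (1/r) *\<^sub>R (F (h+r) - F h) - (1/r) *\<^sub>R (F (0+r) - F 0)
                       = diff_quotient T (F h) r) (at_right 0)"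
    using eventually_at_right_less[of 0]
  proof eventually_elim
    case (elim r)
    have "F (r + h) = F r + integral {r..r+h} (\<lambda>s. T s x)"
      using Henstock_Kurzweil_Integration.integral_combine[OF _ _ integrable_orbit, of 0 r "r + h"]
        elim assms by (simp add: F_def)
    also have "integral {r..r+h} (\<lambda>s. T s x) = T r (F h)"
      using semigroup_integral_orbit[of h r] elim assms by (simp add: F_def)
    finally show ?case
      by (simp add: F_def diff_quotient_def algebra_simps add.commute)
  qed
  moreover have "((\<lambda>r. (1/r) *\<^sub>R (F (h+r) - F h) - (1/r) *\<^sub>R (F (0+r) - F 0))
                   \<longlongrightarrow> T h x - T 0 x) (at_right 0)"
    using assms by (intro tendsto_diff F_quotient) simp_all
  ultimately have "(diff_quotient T (F h) \<longlongrightarrow> T h x - T 0 x) (at_right 0)"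
    by (rule tendsto_cong[THEN iffD1])
  then show ?thesis
    unfolding F_def by (rule gen_domI)
qed

lemma closure_gen_dom: "closure (gen_dom T) = UNIV"
proof -
  have "x \<in> closure (gen_dom T)" for x
  proof (rule Lim_in_closed_set[OF closed_closure _ _ ])
    show "((\<lambda>r. (1/r) *\<^sub>R integral {0..r} (\<lambda>s. T s x)) \<longlongrightarrow> x) (at_right 0)"
      using tendsto_right_difference_quotient[OF has_vector_derivative_integral_orbit[of 0]]
      by simp
    show "eventually (\<lambda>r. (1/r) *\<^sub>R integral {0..r} (\<lambda>s. T s x) \<in> closure (gen_dom T)) (at_right 0)"
      using eventually_at_right_less[of 0]
    proof eventually_elim
      case (elim r)
      then have "integral {0..r} (\<lambda>s. T s x) \<in> gen_dom T"
        by (intro integral_orbit_in_gen_dom) simp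
      then show ?case
        using subspace_scale[OF subspace_gen_dom] closure_subset by blast
    qed
  qed simp
  then show ?thesis
    by blast
qed

lemma semigroup_bounded_below_iterate:
  assumes "0 \<le> \<eta>" "0 \<le> c" "\<And>x. c * norm x \<le> norm (T \<eta> x)"
  shows "c ^ n * norm x \<le> norm (T (real n * \<eta>) x)"
proof (induction n arbitrary: x)
  case (Suc n)
  have "c ^ Suc n * norm x \<le> c * norm (T (real n * \<eta>) x)"
    using Suc.IH[of x] assms(2) by (simp add: mult.assoc mult_left_mono)
  also have "\<dots> \<le> norm (T \<eta> (T (real n * \<eta>) x))"
    by (rule assms(3))
  also have "T \<eta> (T (real n * \<eta>) x) = T (real (Suc n) * \<eta>) x"
    using semigroup_add[of \<eta> "real n * \<eta>" x] assms(1) by (simp add: algebra_simps)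
  finally show ?case .
qed simp

end


section \<open>Observation energy\<close>

context
  fixes T :: "real \<Rightarrow> 'x::banach \<Rightarrow>\<^sub>L 'x" and A :: "'x \<Rightarrow> 'x" and D :: "'x set"
    and C :: "'x \<Rightarrow> 'y::banach"
  assumes sg: "c0_semigroup T" and genA: "is_minus_generator T A D"
    and gbl: "graph_bounded_linear A D C"
begin

lemma dom_eq_gen_dom: "D = gen_dom T"
  using genA by (simp add: is_minus_generator_def)

lemma semigroup_in_dom: "x \<in> D \<Longrightarrow> 0 \<le> t \<Longrightarrow> T t x \<in> D"
  using semigroup_in_gen_dom[OF sg] by (simp add: dom_eq_gen_dom)

lemma observation_scaleR: "x \<in> D \<Longrightarrow> C (c *\<^sub>R x) = c *\<^sub>R C x"
  using gbl by (simp add: graph_bounded_linear_def)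

lemma observation_diff:
  assumes "x \<in> D" "y \<in> D"
  shows "C (x - y) = C x - C y"
proof -
  have "x - y \<in> D"
    using assms subspace_diff[OF subspace_gen_dom] by (simp add: dom_eq_gen_dom)
  then have "C ((x - y) + y) = C (x - y) + C y"
    using gbl assms(2) unfolding graph_bounded_linear_def by blast
  then show ?thesis
    by simp
qed

lemma observation_graph_bound:
  obtains K where "0 \<le> K" "\<And>x. x \<in> D \<Longrightarrow> norm (C x) \<le> K * (norm x + norm (gen T x))"
proof -
  obtain K where K: "\<And>x. x \<in> D \<Longrightarrow> norm (C x) \<le> K * (norm x + norm (A x))"
    using gbl unfolding graph_bounded_linear_def by blast
  have "norm (C x) \<le> \<bar>K\<bar> * (norm x + norm (gen T x))" if "x \<in> D" for x
  proof -
    have "A x = - gen T x"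
      using genA that by (simp add: is_minus_generator_def)
    then have "norm (C x) \<le> K * (norm x + norm (gen T x))"
      using K[OF that] by simp
    also have "\<dots> \<le> \<bar>K\<bar> * (norm x + norm (gen T x))"
      by (intro mult_right_mono) simp_all
    finally show ?thesis .
  qed
  then show ?thesis
    using that[of "\<bar>K\<bar>"] by simp
qed

(* C is only bounded for the graph norm; the graph norm of T t x - T s x is controlled by the
   orbits of x and of gen T x, since gen commutes with the semigroup. *)
lemma continuous_on_observation:
  assumes "x \<in> D"
  shows "continuous_on {0..} (\<lambda>t. C (T t x))"
  unfolding continuous_on_def
proof
  fix s :: real
  assume s: "s \<in> {0..}"
  obtain K where K: "0 \<le> K" "\<And>z. z \<in> D \<Longrightarrow> norm (C z) \<le> K * (norm z + norm (gen T z))"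
    using observation_graph_bound by blast
  have orbit_tendsto: "((\<lambda>t. T t z - T s z) \<longlongrightarrow> 0) (at s within {0..})" for z
  proof -
    have "((\<lambda>t. T t z) \<longlongrightarrow> T s z) (at s within {0..})"
      using continuous_on_orbit[OF sg, of z] s unfolding continuous_on_def by blast
    then show ?thesis
      by (rule Lim_null[THEN iffD1])
  qed
  have bound: "norm (C (T t x) - C (T s x))
      \<le> norm (norm (T t x - T s x) + norm (T t (gen T x) - T s (gen T x))) * K"
    if t: "t \<in> {0..}" for t
  proof -
    have dom: "T t x \<in> D" "T s x \<in> D"
      using assms s t semigroup_in_dom by auto
    have "gen T (T t x - T s x) = T t (gen T x) - T s (gen T x)"
      using assms s t dom by (simp add: dom_eq_gen_dom gen_diff gen_semigroup[OF sg])
    moreover have "T t x - T s x \<in> D"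
      using dom subspace_diff[OF subspace_gen_dom] by (simp add: dom_eq_gen_dom)
    ultimately show ?thesis
      using K(2)[of "T t x - T s x"] observation_diff[OF dom] by (simp add: mult.commute)
  qed
  have "((\<lambda>t. norm (T t x - T s x) + norm (T t (gen T x) - T s (gen T x))) \<longlongrightarrow> 0)
      (at s within {0..})"
    by (intro tendsto_add_zero tendsto_norm_zero orbit_tendsto)
  moreover have "eventually (\<lambda>t. norm (C (T t x) - C (T s x))
      \<le> norm (norm (T t x - T s x) + norm (T t (gen T x) - T s (gen T x))) * K) (at s within {0..})"
    unfolding eventually_at_filter by (intro always_eventually allI impI bound)
  ultimately have "((\<lambda>t. C (T t x) - C (T s x)) \<longlongrightarrow> 0) (at s within {0..})"
    by (rule tendsto_0_le)
  then show "((\<lambda>t. C (T t x)) \<longlongrightarrow> C (T s x)) (at s within {0..})"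
    by (rule Lim_null[THEN iffD2])
qed

lemma integrable_observation_energy:
  "x \<in> D \<Longrightarrow> 0 \<le> a \<Longrightarrow> (\<lambda>t. (norm (C (T t x)))\<^sup>2) integrable_on {a..b}"
  by (intro integrable_continuous_interval continuous_intros
        continuous_on_subset[OF continuous_on_observation]) auto

lemma obs_energy_split:
  assumes "x \<in> D" "0 \<le> \<eta>" "\<eta> \<le> \<tau>"
  shows "obs_energy T C \<tau> x = obs_energy T C \<eta> x + obs_energy T C (\<tau> - \<eta>) (T \<eta> x)"
proof -
  define f where "f t = (norm (C (T t x)))\<^sup>2" for t
  have "integral {0..\<tau>} f = integral {0..\<eta>} f + integral {\<eta>..\<tau>} f"
    unfolding f_def using assms integrable_observation_energy[of x 0 \<tau>]
    by (simp add: Henstock_Kurzweil_Integration.integral_combine)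
  also have "integral {\<eta>..\<tau>} f = integral {0..\<tau>-\<eta>} (\<lambda>t. f (t + \<eta>))"
    using integral_shift_real_ivl[where f = f and a = \<eta> and b = \<tau> and c = \<eta>] by simp
  also have "\<dots> = obs_energy T C (\<tau> - \<eta>) (T \<eta> x)"
    unfolding obs_energy_def f_def
    using assms(2) by (intro integral_cong) (simp add: semigroup_add[OF sg])
  finally show ?thesis
    unfolding obs_energy_def f_def .
qed

lemma obs_energy_nonneg: "x \<in> D \<Longrightarrow> 0 \<le> obs_energy T C s x"
  unfolding obs_energy_def
  by (cases "0 \<le> s") (auto intro!: integral_nonneg integrable_observation_energy)

lemma obs_energy_mono:
  assumes "x \<in> D" "0 \<le> s" "s \<le> s'"
  shows "obs_energy T C s x \<le> obs_energy T C s' x"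
  using obs_energy_split[OF assms] obs_energy_nonneg[OF semigroup_in_dom[OF assms(1,2)]] by simp

lemma obs_energy_scaleR:
  assumes "x \<in> D"
  shows "obs_energy T C s (c *\<^sub>R x) = c\<^sup>2 * obs_energy T C s x"
proof -
  have "obs_energy T C s (c *\<^sub>R x) = integral {0..s} (\<lambda>t. c\<^sup>2 * (norm (C (T t x)))\<^sup>2)"
    unfolding obs_energy_def
    using assms semigroup_in_dom
    by (intro integral_cong) (simp add: blinfun.scaleR_right observation_scaleR power_mult_distrib)
  then show ?thesis
    by (simp add: obs_energy_def)
qed

lemma obs_energy_normalize:
  assumes "x \<in> D" "x \<noteq> 0"
  shows "x /\<^sub>R norm x \<in> {u \<in> D. norm u = 1}"
    and "obs_energy T C s x = (norm x)\<^sup>2 * obs_energy T C s (x /\<^sub>R norm x)"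
proof -
  show "x /\<^sub>R norm x \<in> {u \<in> D. norm u = 1}"
    using assms subspace_scale[OF subspace_gen_dom] by (simp add: dom_eq_gen_dom)
  then show "obs_energy T C s x = (norm x)\<^sup>2 * obs_energy T C s (x /\<^sub>R norm x)"
    using obs_energy_scaleR[of "x /\<^sub>R norm x" s "norm x"] assms(2) by simp
qed

lemma obs_energy_le_M_sq:
  assumes "M_sq T D C s \<le> ereal M" "x \<in> D"
  shows "obs_energy T C s x \<le> M * (norm x)\<^sup>2"
proof (cases "x = 0")
  case True
  then show ?thesis
    using obs_energy_scaleR[OF assms(2), of s 0] by simp
next
  case False
  have "ereal (obs_energy T C s (x /\<^sub>R norm x)) \<le> M_sq T D C s"
    unfolding M_sq_def using obs_energy_normalize(1)[OF assms(2) False] by (rule SUP_upper)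
  then have "obs_energy T C s (x /\<^sub>R norm x) \<le> M"
    using assms(1) by (metis order_trans ereal_less_eq(3))
  from mult_right_mono[OF this zero_le_power2[of "norm x"]] show ?thesis
    using obs_energy_normalize(2)[OF assms(2) False] by (simp add: mult.commute)
qed

lemma obs_energy_ge_m_sq:
  assumes "ereal m \<le> m_sq T D C s" "x \<in> D"
  shows "m * (norm x)\<^sup>2 \<le> obs_energy T C s x"
proof (cases "x = 0")
  case True
  then show ?thesis
    using obs_energy_scaleR[OF assms(2), of s 0] by simp
next
  case False
  have "m_sq T D C s \<le> ereal (obs_energy T C s (x /\<^sub>R norm x))"
    unfolding m_sq_def using obs_energy_normalize(1)[OF assms(2) False] by (rule INF_lower)
  then have "m \<le> obs_energy T C s (x /\<^sub>R norm x)"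
    using assms(1) by (metis order_trans ereal_less_eq(3))
  from mult_right_mono[OF this zero_le_power2[of "norm x"]] show ?thesis
    using obs_energy_normalize(2)[OF assms(2) False] by (simp add: mult.commute)
qed

lemma BFC_energy_inequality:
  assumes "x \<in> D" "0 \<le> \<eta>" "\<eta> \<le> \<tau>"
    and "M_sq T D C \<eta> \<le> ereal a" "ereal b \<le> m_sq T D C \<tau>" "M_sq T D C \<tau> \<le> ereal M"
  shows "(b - a) * (norm x)\<^sup>2 \<le> M * (norm (T \<eta> x))\<^sup>2"
proof -
  have Tx: "T \<eta> x \<in> D"
    using assms(1,2) semigroup_in_dom by simp
  have "b * (norm x)\<^sup>2 \<le> obs_energy T C \<tau> x"
    using assms(5,1) by (rule obs_energy_ge_m_sq)
  also have "\<dots> = obs_energy T C \<eta> x + obs_energy T C (\<tau> - \<eta>) (T \<eta> x)"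
    using assms(1-3) by (rule obs_energy_split)
  also have "\<dots> \<le> a * (norm x)\<^sup>2 + M * (norm (T \<eta> x))\<^sup>2"
  proof (rule add_mono)
    show "obs_energy T C \<eta> x \<le> a * (norm x)\<^sup>2"
      using assms(4,1) by (rule obs_energy_le_M_sq)
    have "obs_energy T C (\<tau> - \<eta>) (T \<eta> x) \<le> obs_energy T C \<tau> (T \<eta> x)"
      using Tx assms(2,3) by (intro obs_energy_mono) simp_all
    also have "\<dots> \<le> M * (norm (T \<eta> x))\<^sup>2"
      using assms(6) Tx by (rule obs_energy_le_M_sq)
    finally show "obs_energy T C (\<tau> - \<eta>) (T \<eta> x) \<le> M * (norm (T \<eta> x))\<^sup>2" .
  qed
  finally show ?thesis
    by (simp add: algebra_simps)
qed

(* M_sq and m_sq are extended reals (infinite when D contains no unit vector), so real bounds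
   a < b and M are interposed before applying the energy inequality. *)
lemma BFC_system_bounded_below_on_dom:
  assumes "BFC_system T D C"
  obtains \<eta> c where "0 < \<eta>" "0 < c" "\<And>x. x \<in> D \<Longrightarrow> c * norm x \<le> norm (T \<eta> x)"
proof -
  obtain \<eta> \<tau> where times: "0 < \<eta>" "\<eta> < \<tau>" and adm: "M_sq T D C \<tau> < \<infinity>"
    and obs: "0 < m_sq T D C \<tau>" and bfc: "M_sq T D C \<eta> < m_sq T D C \<tau>"
    using assms unfolding BFC_system_def admissible_in_time_def exactly_observable_in_time_def
    by blast
  obtain a where a: "M_sq T D C \<eta> < ereal a" "ereal a < m_sq T D C \<tau>"
    using ereal_dense2[OF bfc] by blast
  obtain b where b: "max (ereal a) 0 < ereal b" "ereal b < m_sq T D C \<tau>"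
    using ereal_dense2[of "max (ereal a) 0"] a(2) obs by auto
  obtain M0 where "M_sq T D C \<tau> < ereal M0"
    using ereal_dense2[OF adm] by blast
  define M where "M = max M0 1"
  have M: "M_sq T D C \<tau> \<le> ereal M" "0 < M"
    using \<open>M_sq T D C \<tau> < ereal M0\<close> by (auto simp: M_def order.trans[OF less_imp_le])
  have ab: "a < b" "0 < b"
    using b(1) by auto
  define c where "c = sqrt ((b - a) / M)"
  have "c * norm x \<le> norm (T \<eta> x)" if "x \<in> D" for x
  proof -
    have "(b - a) * (norm x)\<^sup>2 \<le> M * (norm (T \<eta> x))\<^sup>2"
      using that times a(1) b(2) M(1) by (intro BFC_energy_inequality) simp_all
    then have "(c * norm x)\<^sup>2 \<le> (norm (T \<eta> x))\<^sup>2"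
      using ab M(2) by (simp add: c_def power_mult_distrib field_simps)
    then show ?thesis
      by (rule power2_le_imp_le) simp
  qed
  moreover have "0 < c"
    using ab M(2) by (simp add: c_def)
  ultimately show ?thesis
    using that times(1) by blast
qed

end


theorem proposition3p8:
  fixes T :: "real \<Rightarrow> 'x::banach \<Rightarrow>\<^sub>L 'x"
    and A :: "'x \<Rightarrow> 'x" and D :: "'x set"
    and C :: "'x \<Rightarrow> 'y::banach"
  assumes "c0_semigroup T"
    and "is_minus_generator T A D"
    and "graph_bounded_linear A D C"
    and "BFC_system T D C"
    and "\<exists>t>0. compact_op (T t)"
  shows "finite_dim_space TYPE('x)"
proof -
  obtain \<eta> c where "0 < \<eta>" "0 < c" and on_dom: "\<And>x. x \<in> D \<Longrightarrow> c * norm x \<le> norm (T \<eta> x)"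
    using BFC_system_bounded_below_on_dom[OF assms(1-4)] by blast
  have "c * norm x \<le> norm (T \<eta> x)" for x
    using bounded_below_closure[OF on_dom] closure_gen_dom[OF assms(1)]
    by (simp add: dom_eq_gen_dom[OF assms(1-3)])
  then have below: "c ^ n * norm x \<le> norm (T (real n * \<eta>) x)" for n x
    using \<open>0 < \<eta>\<close> \<open>0 < c\<close> by (intro semigroup_bounded_below_iterate[OF assms(1)]) simp_all
  obtain t where "0 < t" "compact_op (T t)"
    using assms(5) by blast
  obtain n :: nat where "t < real n * \<eta>"
    using ex_less_of_nat_mult[OF \<open>0 < \<eta>\<close>] by blast
  then have "T (real n * \<eta>) = T (real n * \<eta> - t) o\<^sub>L T t"
    using semigroup_comp[OF assms(1), of "real n * \<eta> - t" t] \<open>0 < t\<close> by simp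
  then have "compact_op (T (real n * \<eta>))"
    using compact_op_comp[OF \<open>compact_op (T t)\<close>] by simp
  then have "compact (cball (0::'x) 1)"
    using below \<open>0 < c\<close>
    by (intro compact_cball_if_compact_op_bounded_below[where d = "c ^ n"]) simp_all
  then show ?thesis
    by (rule compact_cball_imp_finite_dim)
qed

end
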